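(* Let $\mathcal I'$ be an SMI instance and $a$ an agent of $\mathcal I'$. Then there is at most one agent $a'$ with $a'\notin \mathrm{ma}(\mathcal I')$ and $a'\in\mathrm{ma}(\mathcal I'\setminus\{a\})$.
   Context: In a Stable Marriage with Incomplete Lists (SMI) instance there are men $U$ and women $W$, and each agent has a strict preference list over a subset of the agents of opposite gender; $m,w$ are mutually acceptable if each appears in the other's list. A matching is a set of mutually acceptable man–woman pairs in which each agent appears at most once. A mutually acceptable pair $\{m,w\}$ blocks a matching $M$ if ($m$ is unassigned or prefers $w$ to his partner) and ($w$ is unassigned or prefers $m$ to her partner); $M$ is stable if no pair blocks it. By the Rural Hospitals Theorem all stable matchings of an SMI instance assign the same set of agents; $\mathrm{ma}(\mathcal I)$ denotes this set of agents matched in the stable matchings of $\mathcal I$. $\mathcal I'\setminus\{a\}$ is the SMI instance obtained by deleting agent $a$ (and removing it from all lists). *)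

theory Defs
  imports Main
begin

text \<open>An SMI instance is given by a set of men U, a set of women W and
preference lists P :: agent \<Rightarrow> agent list (strict preferences = distinct lists;
earlier in the list = more preferred).\<close>

definition smi :: "'a set \<Rightarrow> 'a set \<Rightarrow> ('a \<Rightarrow> 'a list) \<Rightarrow> bool" where
  "smi U W P \<longleftrightarrow> finite U \<and> finite W \<and> U \<inter> W = {} \<and>
     (\<forall>m\<in>U. distinct (P m) \<and> set (P m) \<subseteq> W) \<and>
     (\<forall>w\<in>W. distinct (P w) \<and> set (P w) \<subseteq> U)"

definition acceptable :: "('a \<Rightarrow> 'a list) \<Rightarrow> 'a \<Rightarrow> 'a \<Rightarrow> bool" where
  "acceptable P m w \<longleftrightarrow> w \<in> set (P m) \<and> m \<in> set (P w)"

definition prefers :: "('a \<Rightarrow> 'a list) \<Rightarrow> 'a \<Rightarrow> 'a \<Rightarrow> 'a \<Rightarrow> bool" where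
  "prefers P x y z \<longleftrightarrow> (\<exists>i j. i < j \<and> j < length (P x) \<and> P x ! i = y \<and> P x ! j = z)"

definition matching :: "'a set \<Rightarrow> 'a set \<Rightarrow> ('a \<Rightarrow> 'a list) \<Rightarrow> ('a \<times> 'a) set \<Rightarrow> bool" where
  "matching U W P M \<longleftrightarrow>
     (\<forall>(m, w)\<in>M. m \<in> U \<and> w \<in> W \<and> acceptable P m w) \<and>
     (\<forall>m w w'. (m, w) \<in> M \<longrightarrow> (m, w') \<in> M \<longrightarrow> w = w') \<and>
     (\<forall>m m' w. (m, w) \<in> M \<longrightarrow> (m', w) \<in> M \<longrightarrow> m = m')"

definition blocks :: "'a set \<Rightarrow> 'a set \<Rightarrow> ('a \<Rightarrow> 'a list) \<Rightarrow> ('a \<times> 'a) set \<Rightarrow> 'a \<Rightarrow> 'a \<Rightarrow> bool" where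
  "blocks U W P M m w \<longleftrightarrow> m \<in> U \<and> w \<in> W \<and> acceptable P m w \<and>
     ((\<forall>w'. (m, w') \<notin> M) \<or> (\<exists>w'. (m, w') \<in> M \<and> prefers P m w w')) \<and>
     ((\<forall>m'. (m', w) \<notin> M) \<or> (\<exists>m'. (m', w) \<in> M \<and> prefers P w m m'))"

definition stable :: "'a set \<Rightarrow> 'a set \<Rightarrow> ('a \<Rightarrow> 'a list) \<Rightarrow> ('a \<times> 'a) set \<Rightarrow> bool" where
  "stable U W P M \<longleftrightarrow> matching U W P M \<and> (\<forall>m w. \<not> blocks U W P M m w)"

text \<open>Agents matched in the stable matchings (by the Rural Hospitals Theorem this is
the set matched in any single stable matching).\<close>
definition ma :: "'a set \<Rightarrow> 'a set \<Rightarrow> ('a \<Rightarrow> 'a list) \<Rightarrow> 'a set" where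
  "ma U W P = {x. \<exists>M. stable U W P M \<and> (\<exists>y. (x, y) \<in> M \<or> (y, x) \<in> M)}"

definition del_pref :: "'a \<Rightarrow> ('a \<Rightarrow> 'a list) \<Rightarrow> ('a \<Rightarrow> 'a list)" where
  "del_pref a P = (\<lambda>x. filter (\<lambda>y. y \<noteq> a) (P x))"

end

theory Submission imports Defs begin

text \<open>Fix a stable matching M of the instance and a stable matching M' of the
instance with a set D of agents deleted. A man who strictly prefers M' to M is
matched in M' to a woman who strictly prefers M to M' (stability of M), and
conversely a woman who prefers M to M' and is not adjacent in M to D has an
M-partner who prefers M' to M (stability of M'). Comparing the sizes of the two
sets of agents via these injections, the men newly matched in M' and the women
who lost their partner are together at most as many as the agents of D and their
M-partners among the women preferring M. For D = {} this is the Rural Hospitals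
Theorem; for D = {a}, adding up the bounds for both sides of the market, the agent
a itself, if matched in M, is one agent losing its partner, and so at most one
agent can be newly matched.\<close>

lemma prefers_total:
  assumes "y \<in> set (P x)" "z \<in> set (P x)" "y \<noteq> z"
  shows "prefers P x y z \<or> prefers P x z y"
proof -
  obtain i j where "i < length (P x)" "P x ! i = y" "j < length (P x)" "P x ! j = z"
    using assms(1,2) by (metis in_set_conv_nth)
  then show ?thesis
    unfolding prefers_def using assms(3) by (metis linorder_neqE_nat)
qed

lemma prefers_asym: "distinct (P x) \<Longrightarrow> prefers P x y z \<Longrightarrow> \<not> prefers P x z y"
proof
  assume d: "distinct (P x)" and "prefers P x y z" "prefers P x z y"
  then obtain i j i' j' where h: "i < j" "j < length (P x)" "P x ! i = y" "P x ! j = z"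
     "i' < j'" "j' < length (P x)" "P x ! i' = z" "P x ! j' = y"
    unfolding prefers_def by blast
  have "i = j'" "j = i'" using d h nth_eq_iff_index_eq by (metis order.strict_trans)+
  then show False using h by simp
qed

lemma prefers_irrefl: "distinct (P x) \<Longrightarrow> \<not> prefers P x y y"
  by (metis prefers_asym)

lemma prefers_iff_append: "prefers P x y z \<longleftrightarrow> (\<exists>as bs. P x = as @ y # bs \<and> z \<in> set bs)"
proof
  assume "prefers P x y z"
  then obtain i j where ij: "i < j" "j < length (P x)" "P x ! i = y" "P x ! j = z"
    unfolding prefers_def by blast
  have "P x = take i (P x) @ P x ! i # drop (Suc i) (P x)"
    by (rule id_take_nth_drop) (use ij in simp)
  moreover have "drop (Suc i) (P x) ! (j - Suc i) = z" "j - Suc i < length (drop (Suc i) (P x))"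
    using ij by simp_all
  ultimately show "\<exists>as bs. P x = as @ y # bs \<and> z \<in> set bs" using ij nth_mem by metis
next
  assume "\<exists>as bs. P x = as @ y # bs \<and> z \<in> set bs"
  then obtain as bs k where h: "P x = as @ y # bs" "k < length bs" "bs ! k = z"
    by (metis in_set_conv_nth)
  then have "P x ! length as = y" "P x ! (length as + Suc k) = z" "length as + Suc k < length (P x)"
    by (simp_all add: nth_append)
  then show "prefers P x y z"
    unfolding prefers_def by (intro exI[of _ "length as"] exI[of _ "length as + Suc k"]) simp
qed

lemma prefers_filter:
  assumes "prefers P x y z" "Q y" "Q z"
  shows "prefers (\<lambda>x. filter Q (P x)) x y z"
proof -
  obtain as bs where "P x = as @ y # bs" "z \<in> set bs"
    using assms(1) prefers_iff_append by metis
  then have "filter Q (P x) = filter Q as @ y # filter Q bs" "z \<in> set (filter Q bs)"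
    using assms(2,3) by simp_all
  then show ?thesis by (subst prefers_iff_append) blast
qed

definition del_agents :: "'a set \<Rightarrow> ('a \<Rightarrow> 'a list) \<Rightarrow> ('a \<Rightarrow> 'a list)" where
  "del_agents D P = (\<lambda>x. filter (\<lambda>y. y \<notin> D) (P x))"

lemma del_pref_eq_del_agents: "del_pref a P = del_agents {a} P"
  unfolding del_pref_def del_agents_def by simp

lemma del_agents_empty: "del_agents {} P = P"
  unfolding del_agents_def by simp

lemma smi_del_agents: "smi U W P \<Longrightarrow> smi (U - D) (W - D) (del_agents D P)"
  unfolding smi_def del_agents_def by auto

lemma acceptable_del_agents:
  "acceptable (del_agents D P) m w \<longleftrightarrow> acceptable P m w \<and> m \<notin> D \<and> w \<notin> D"
  unfolding acceptable_def del_agents_def by auto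

lemma prefers_del_agents:
  "prefers P x y z \<Longrightarrow> y \<notin> D \<Longrightarrow> z \<notin> D \<Longrightarrow> prefers (del_agents D P) x y z"
  unfolding del_agents_def by (rule prefers_filter)

lemma matching_del_agents:
  "matching (U - D) (W - D) (del_agents D P) M \<Longrightarrow> matching U W P M"
  unfolding matching_def acceptable_del_agents by blast

lemma smi_swap: "smi W U P \<longleftrightarrow> smi U W P"
  unfolding smi_def by blast

lemma matching_converse: "matching W U P (M\<inverse>) \<longleftrightarrow> matching U W P M"
  unfolding matching_def acceptable_def by auto

lemma blocks_converse: "blocks W U P (M\<inverse>) w m \<longleftrightarrow> blocks U W P M m w"
  unfolding blocks_def acceptable_def by blast

lemma stable_converse: "stable W U P (M\<inverse>) \<longleftrightarrow> stable U W P M"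
  unfolding stable_def using matching_converse blocks_converse by metis

definition acceptable_pairs :: "'a set \<Rightarrow> 'a set \<Rightarrow> ('a \<Rightarrow> 'a list) \<Rightarrow> ('a \<times> 'a) set" where
  "acceptable_pairs U W P = {(m, w). m \<in> U \<and> w \<in> W \<and> acceptable P m w}"

lemma acceptable_pairs_converse: "(acceptable_pairs U W P)\<inverse> = acceptable_pairs W U P"
  unfolding acceptable_pairs_def acceptable_def by auto

lemma matching_iff_single_valued:
  "matching U W P M \<longleftrightarrow> M \<subseteq> acceptable_pairs U W P \<and> single_valued M \<and> single_valued (M\<inverse>)"
  unfolding matching_def acceptable_pairs_def single_valued_def by auto

lemma stable_Domain_Range: "stable U W P M \<Longrightarrow> Domain M \<subseteq> U \<and> Range M \<subseteq> W"
  unfolding stable_def matching_def by blast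

section \<open>Existence of stable matchings\<close>

definition rejected :: "('a \<Rightarrow> 'a list) \<Rightarrow> ('a \<times> 'a) set \<Rightarrow> ('a \<times> 'a) set" where
  "rejected P X = {(x, y) \<in> X. \<exists>y'. (x, y') \<in> X \<and> prefers P x y' y}"

lemma rejected_mono: "X \<subseteq> Y \<Longrightarrow> rejected P X \<subseteq> rejected P Y"
  unfolding rejected_def by blast

lemma favourite_exists:
  assumes "(x, y) \<in> X" "distinct (P x)" "\<And>y'. (x, y') \<in> X \<Longrightarrow> y' \<in> set (P x)"
  shows "\<exists>y0. (x, y0) \<in> X - rejected P X \<and> (y0 = y \<or> prefers P x y0 y)"
proof -
  obtain k where k: "k < length (P x)" "P x ! k = y"
    using assms(1,3) by (metis in_set_conv_nth)
  define i where "i = (LEAST i. (x, P x ! i) \<in> X)"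
  have "(x, P x ! k) \<in> X" using k assms(1) by simp
  then have i: "(x, P x ! i) \<in> X" "i \<le> k"
    unfolding i_def by (rule LeastI, rule Least_le)
  have least: "(x, P x ! j) \<notin> X" if "j < i" for j
    using that unfolding i_def by (rule not_less_Least)
  have "(x, P x ! i) \<notin> rejected P X"
  proof
    assume "(x, P x ! i) \<in> rejected P X"
    then obtain y' where "(x, y') \<in> X" "prefers P x y' (P x ! i)"
      unfolding rejected_def by blast
    then obtain j l where jl: "j < l" "l < length (P x)" "(x, P x ! j) \<in> X" "P x ! l = P x ! i"
      unfolding prefers_def by blast
    have "i < length (P x)" using i k by linarith
    then have "l = i" using jl assms(2) nth_eq_iff_index_eq by metis
    then show False using least jl by blast
  qed
  moreover have "P x ! i = y \<or> prefers P x (P x ! i) y"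
  proof (cases "i = k")
    case False
    then have "i < k" using i by simp
    then show ?thesis unfolding prefers_def using k by blast
  qed (use k in simp)
  ultimately show ?thesis using i by blast
qed

lemma single_valued_unrejected:
  assumes "X \<subseteq> acceptable_pairs U W P"
  shows "single_valued (X - rejected P X)"
  unfolding single_valued_def
proof (intro allI impI)
  fix x y z assume xy: "(x, y) \<in> X - rejected P X" and xz: "(x, z) \<in> X - rejected P X"
  have "y \<in> set (P x)" "z \<in> set (P x)"
    using xy xz assms unfolding acceptable_pairs_def acceptable_def by auto
  show "y = z"
  proof (rule ccontr)
    assume "y \<noteq> z"
    with \<open>y \<in> set (P x)\<close> \<open>z \<in> set (P x)\<close> have "prefers P x y z \<or> prefers P x z y"
      by (rule prefers_total)
    then show False using xy xz unfolding rejected_def by blast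
  qed
qed

lemma unrejected_not_blocks:
  assumes smi: "smi U W P" and X: "X \<subseteq> acceptable_pairs U W P" and mw: "(m, w) \<in> X"
  shows "\<not> blocks U W P (X - rejected P X) m w"
proof
  assume bl: "blocks U W P (X - rejected P X) m w"
  have "m \<in> U" using mw X unfolding acceptable_pairs_def by blast
  then have d: "distinct (P m)" using smi unfolding smi_def by blast
  have "y' \<in> set (P m)" if "(m, y') \<in> X" for y'
    using X that unfolding acceptable_pairs_def acceptable_def by blast
  then obtain w0 where w0: "(m, w0) \<in> X - rejected P X" "w0 = w \<or> prefers P m w0 w"
    using favourite_exists[of m w X P, OF mw d] by blast
  then obtain w' where w': "(m, w') \<in> X - rejected P X" "prefers P m w w'"
    using bl unfolding blocks_def by blast
  have "w' = w0"
    using single_valuedD[OF single_valued_unrejected[OF X] w'(1) w0(1)] .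
  then have "prefers P m w w0" using w'(2) by simp
  then show False using w0(2) prefers_asym[of P m, OF d] prefers_irrefl[of P m, OF d] by blast
qed

lemma stable_if_mutually_unrejected:
  assumes smi: "smi U W P" and E: "E = acceptable_pairs U W P"
    and XE: "X \<subseteq> E" and YE: "Y \<subseteq> E" and XY: "E \<subseteq> X \<union> Y"
    and X: "X \<inter> Y = X - rejected P X"
    and Y: "X \<inter> Y = Y - (rejected P (Y\<inverse>))\<inverse>"
  shows "stable U W P (X \<inter> Y)"
proof -
  have XE': "X \<subseteq> acceptable_pairs U W P" using XE E by simp
  have YE': "Y\<inverse> \<subseteq> acceptable_pairs W U P"
    using YE E acceptable_pairs_converse by blast
  have Y': "(X \<inter> Y)\<inverse> = Y\<inverse> - rejected P (Y\<inverse>)"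
    using Y by auto
  have "matching U W P (X \<inter> Y)"
    unfolding matching_iff_single_valued
  proof (intro conjI)
    show "X \<inter> Y \<subseteq> acceptable_pairs U W P" using XE' by blast
    show "single_valued (X \<inter> Y)" unfolding X using XE' by (rule single_valued_unrejected)
    show "single_valued ((X \<inter> Y)\<inverse>)" unfolding Y' using YE' by (rule single_valued_unrejected)
  qed
  moreover have "\<not> blocks U W P (X \<inter> Y) m w" for m w
  proof
    assume bl: "blocks U W P (X \<inter> Y) m w"
    then have "(m, w) \<in> E" using E unfolding blocks_def acceptable_pairs_def by blast
    then consider "(m, w) \<in> X" | "(w, m) \<in> Y\<inverse>" using XY by blast
    then show False
    proof cases
      case 1
      then show False using unrejected_not_blocks[OF smi XE'] bl unfolding X by blast
    next
      case 2
      have "smi W U P" using smi smi_swap by blast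
      then have "\<not> blocks W U P ((X \<inter> Y)\<inverse>) w m"
        unfolding Y' using YE' 2 by (rule unrejected_not_blocks)
      then show False using bl by (simp add: blocks_converse)
    qed
  qed
  ultimately show ?thesis unfolding stable_def by blast
qed

text \<open>Gale and Shapley's deferred acceptance, as a Knaster--Tarski fixed point.\<close>

theorem stable_exists:
  assumes smi: "smi U W P"
  shows "\<exists>M. stable U W P M"
proof -
  define E where "E = acceptable_pairs U W P"
  define f where "f = (\<lambda>X. E - (rejected P ((E - rejected P X)\<inverse>))\<inverse>)"
  have "mono f"
  proof
    fix X Y :: "('a \<times> 'a) set" assume "X \<subseteq> Y"
    then have "(E - rejected P Y)\<inverse> \<subseteq> (E - rejected P X)\<inverse>"
      using rejected_mono by blast
    then show "f X \<subseteq> f Y" unfolding f_def using rejected_mono by blast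
  qed
  define X where "X = lfp f"
  define Y where "Y = E - rejected P X"
  have X: "X = E - (rejected P (Y\<inverse>))\<inverse>"
    unfolding X_def Y_def using lfp_unfold[OF \<open>mono f\<close>] f_def by metis
  have rej: "rejected P Z \<subseteq> Z" for Z unfolding rejected_def by blast
  have "stable U W P (X \<inter> Y)"
  proof (rule stable_if_mutually_unrejected[OF smi E_def])
    show "X \<subseteq> E" "Y \<subseteq> E" using X Y_def by auto
    show "E \<subseteq> X \<union> Y" using X rej[of "Y\<inverse>"] by auto
    show "X \<inter> Y = X - rejected P X" using X Y_def by blast
    show "X \<inter> Y = Y - (rejected P (Y\<inverse>))\<inverse>" using X Y_def by blast
  qed
  then show ?thesis by blast
qed

section \<open>Comparing a stable matching with one after deletion\<close>

text \<open>Being unmatched in B counts as worse than any A-partner.\<close>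

definition better_off :: "('a \<Rightarrow> 'a list) \<Rightarrow> ('a \<times> 'a) set \<Rightarrow> ('a \<times> 'a) set \<Rightarrow> 'a set" where
  "better_off P A B = {x. \<exists>y. (x, y) \<in> A \<and> (\<forall>z. (x, z) \<in> B \<longrightarrow> prefers P x y z)}"

lemma card_le_if_injective_image:
  assumes "single_valued R" "single_valued (R\<inverse>)" "A \<subseteq> Domain R" "R `` A \<subseteq> B" "finite B"
  shows "card A \<le> card B"
proof -
  define f where "f x = (THE y. (x, y) \<in> R)" for x
  have f: "f x = y" if "(x, y) \<in> R" for x y
    unfolding f_def using that assms(1) unfolding single_valued_def by blast
  have "inj_on f A"
  proof
    fix x x' assume "x \<in> A" "x' \<in> A" "f x = f x'"
    then obtain y y' where "(x, y) \<in> R" "(x', y') \<in> R" using assms(3) by blast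
    then show "x = x'" using f \<open>f x = f x'\<close> assms(2) unfolding single_valued_def by fastforce
  qed
  moreover have "f ` A \<subseteq> B" using f assms(3,4) by blast
  ultimately show ?thesis using assms(5) by (rule card_inj_on_le)
qed

lemma better_off_partner_of_stable:
  assumes smi: "smi U W P" and M: "stable U W P M" and M': "matching U W P M'"
    and mw: "(m, w) \<in> M'" and m: "m \<in> better_off P M' M"
  shows "w \<in> better_off P (M\<inverse>) (M'\<inverse>)"
proof -
  have acc: "m \<in> U" "w \<in> W" "acceptable P m w"
    using M' mw unfolding matching_def by auto
  have sv: "single_valued M'" "single_valued (M'\<inverse>)"
    using M' unfolding matching_iff_single_valued by auto
  obtain w1 where w1: "(m, w1) \<in> M'" "\<And>z. (m, z) \<in> M \<Longrightarrow> prefers P m w1 z"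
    using m unfolding better_off_def by blast
  have "w1 = w" using single_valuedD[OF sv(1) w1(1) mw] .
  with w1(2) have better: "\<And>z. (m, z) \<in> M \<Longrightarrow> prefers P m w z" by blast
  then obtain m0 where m0: "(m0, w) \<in> M" "\<not> prefers P w m m0"
    using M acc unfolding stable_def blocks_def by blast
  have "distinct (P m)" using smi acc(1) unfolding smi_def by blast
  then have "m0 \<noteq> m" using better[of w] m0(1) prefers_irrefl by metis
  moreover have "m0 \<in> set (P w)" "m \<in> set (P w)"
    using M m0(1) acc(3) unfolding stable_def matching_def acceptable_def by auto
  ultimately have "prefers P w m0 m" using prefers_total m0(2) by metis
  moreover have "m' = m" if "(w, m') \<in> M'\<inverse>" for m'
    using single_valuedD[OF sv(2) that] mw by simp
  ultimately show ?thesis unfolding better_off_def using m0(1) by blast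
qed

lemma better_off_partner_of_stable_del:
  assumes smi: "smi U W P" and M: "matching U W P M"
    and M': "stable (U - D) (W - D) (del_agents D P) M'"
    and mw: "(m, w) \<in> M" "m \<notin> D" "w \<notin> D" and w: "w \<in> better_off P (M\<inverse>) (M'\<inverse>)"
  shows "m \<in> better_off P M' M"
proof -
  have acc: "m \<in> U" "w \<in> W" "acceptable P m w"
    using M mw unfolding matching_def by auto
  have sv: "single_valued M" "single_valued (M\<inverse>)"
    using M unfolding matching_iff_single_valued by auto
  have M'm: "matching U W P M'"
    using M' matching_del_agents unfolding stable_def by blast
  have M'D: "x \<notin> D" "y \<notin> D" if "(x, y) \<in> M'" for x y
    using M' that unfolding stable_def matching_def by auto
  obtain m1 where m1: "(w, m1) \<in> M\<inverse>" "\<And>z. (w, z) \<in> M'\<inverse> \<Longrightarrow> prefers P w m1 z"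
    using w unfolding better_off_def by blast
  have "m1 = m" using single_valuedD[OF sv(2) m1(1)] mw(1) by simp
  with m1(2) have better: "\<And>m'. (m', w) \<in> M' \<Longrightarrow> prefers P w m m'" by auto
  have "acceptable (del_agents D P) m w"
    using acc(3) mw by (simp add: acceptable_del_agents)
  moreover have "prefers (del_agents D P) w m m'" if "(m', w) \<in> M'" for m'
    using better[OF that] M'D[OF that] mw(2) by (simp add: prefers_del_agents)
  ultimately obtain w' where w': "(m, w') \<in> M'" "\<not> prefers (del_agents D P) m w w'"
    using M' acc(1,2) mw(2,3) unfolding stable_def blocks_def by blast
  have "distinct (P w)" using smi acc(2) unfolding smi_def by blast
  then have "w' \<noteq> w" using better[of m] w'(1) prefers_irrefl by metis
  moreover have "w' \<in> set (P m)" "w \<in> set (P m)"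
    using M'm w'(1) acc(3) unfolding matching_def acceptable_def by auto
  ultimately have "prefers P m w' w"
    using prefers_total w'(2) prefers_del_agents M'D(2)[OF w'(1)] mw(3) by metis
  moreover have "z = w" if "(m, z) \<in> M" for z
    using single_valuedD[OF sv(1) that mw(1)] .
  ultimately show ?thesis unfolding better_off_def using w'(1) by blast
qed

lemma card_newly_matched_le:
  assumes smi: "smi U W P" and M: "stable U W P M"
    and M': "stable (U - D) (W - D) (del_agents D P) M'"
  shows "card (Domain M' - Domain M) + card (Range M - Range M')
           \<le> card (better_off P (M\<inverse>) (M'\<inverse>) \<inter> (D \<union> M `` D))"
proof -
  define SU where "SU = better_off P M' M"
  define SW where "SW = better_off P (M\<inverse>) (M'\<inverse>)"
  define E where "E = D \<union> M `` D"
  have Mm: "matching U W P M" and M'm: "matching U W P M'"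
    using M M' matching_del_agents unfolding stable_def by blast+
  have "SU \<subseteq> U" "SW \<subseteq> W"
    using M'm Mm unfolding SU_def SW_def better_off_def matching_def by auto
  then have fin: "finite SU" "finite SW"
    using smi finite_subset unfolding smi_def by auto
  have new: "Domain M' - Domain M = SU - Domain M"
    and lost: "Range M - Range M' = SW - Range M'"
    unfolding SU_def SW_def better_off_def by auto
  have "card SU \<le> card (SW \<inter> Range M')"
  proof (rule card_le_if_injective_image)
    show "single_valued M'" "single_valued (M'\<inverse>)"
      using M'm unfolding matching_iff_single_valued by auto
    show "SU \<subseteq> Domain M'" unfolding SU_def better_off_def by blast
    show "M' `` SU \<subseteq> SW \<inter> Range M'"
      using better_off_partner_of_stable[OF smi M M'm] unfolding SU_def SW_def by blast
    show "finite (SW \<inter> Range M')" using fin by blast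
  qed
  moreover have "card (SW - E) \<le> card (SU \<inter> Domain M)"
  proof (rule card_le_if_injective_image)
    show "single_valued (M\<inverse>)" "single_valued ((M\<inverse>)\<inverse>)"
      using Mm unfolding matching_iff_single_valued by auto
    show "SW - E \<subseteq> Domain (M\<inverse>)" unfolding SW_def better_off_def by auto
    show "M\<inverse> `` (SW - E) \<subseteq> SU \<inter> Domain M"
      using better_off_partner_of_stable_del[OF smi Mm M'] unfolding SU_def SW_def E_def by blast
    show "finite (SU \<inter> Domain M)" using fin by blast
  qed
  moreover have "card SW = card (SW \<inter> Range M') + card (SW - Range M')"
    and "card SU = card (SU \<inter> Domain M) + card (SU - Domain M)"
    and "card SW = card (SW \<inter> E) + card (SW - E)"
    using fin card_Int_Diff by blast+
  ultimately show ?thesis unfolding new lost SW_def[symmetric] E_def[symmetric] by linarith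
qed

lemma stable_Domain_eq:
  assumes smi: "smi U W P" and "stable U W P M1" "stable U W P M2"
  shows "Domain M1 = Domain M2"
proof -
  have "Domain M2 \<subseteq> Domain M1" if "stable U W P M1" "stable U W P M2" for M1 M2
  proof -
    have "card (Domain M2 - Domain M1) = 0"
      using card_newly_matched_le[OF smi that(1), of "{}" M2] that(2) by (simp add: del_agents_empty)
    moreover have "finite (Domain M2)"
      using that(2) stable_Domain_Range smi finite_subset unfolding smi_def by metis
    ultimately show ?thesis by simp
  qed
  then show ?thesis using assms by blast
qed

lemma stable_Range_eq:
  assumes "smi U W P" "stable U W P M1" "stable U W P M2"
  shows "Range M1 = Range M2"
proof -
  have "Domain (M1\<inverse>) = Domain (M2\<inverse>)"
    using assms by (intro stable_Domain_eq[of W U P]) (simp_all add: smi_swap stable_converse)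
  then show ?thesis by simp
qed

lemma ma_eq_Field: "smi U W P \<Longrightarrow> stable U W P M \<Longrightarrow> ma U W P = Field M"
  unfolding ma_def Field_def using stable_Domain_eq stable_Range_eq by blast

lemma stable_finite_Field:
  assumes "smi U W P" "stable U W P M"
  shows "finite (Field M)"
proof -
  have "Field M \<subseteq> U \<union> W" using stable_Domain_Range[OF assms(2)] unfolding Field_def by blast
  then show ?thesis using assms(1) finite_subset unfolding smi_def by blast
qed

lemma better_off_subset_Domain: "better_off P A B \<subseteq> Domain A"
  unfolding better_off_def by blast

lemma card_partners_le:
  assumes "matching U W P M" "U \<inter> W = {}"
  shows "card (Range M \<inter> ({a} \<union> M `` {a})) + card (Domain M \<inter> ({a} \<union> M\<inverse> `` {a}))
           \<le> (if a \<in> Field M then 2 else 0)"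
proof -
  have sv: "single_valued M" "single_valued (M\<inverse>)"
    using assms(1) unfolding matching_iff_single_valued by auto
  have disj: "Domain M \<inter> Range M = {}"
    using assms unfolding matching_def by blast
  have le1: "card A \<le> 1" if "A \<subseteq> {x}" for A :: "'a set" and x
    using that by (auto dest!: subset_singletonD)
  consider (man) w where "(a, w) \<in> M" | (woman) m where "(m, a) \<in> M" | (unmatched) "a \<notin> Field M"
    unfolding Field_def by blast
  then show ?thesis
  proof cases
    case man
    then have "a \<notin> Range M" using disj by blast
    have "z = w" if "(a, z) \<in> M" for z using single_valuedD[OF sv(1) man that] by simp
    then have "M `` {a} = {w}" using man by blast
    then have "Range M \<inter> ({a} \<union> M `` {a}) \<subseteq> {w}" "Domain M \<inter> ({a} \<union> M\<inverse> `` {a}) \<subseteq> {a}"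
      using \<open>a \<notin> Range M\<close> by auto
    then have "card (Range M \<inter> ({a} \<union> M `` {a})) \<le> 1"
      and "card (Domain M \<inter> ({a} \<union> M\<inverse> `` {a})) \<le> 1"
      using le1 by blast+
    moreover have "a \<in> Field M" using man unfolding Field_def by blast
    ultimately show ?thesis by simp
  next
    case woman
    then have "a \<notin> Domain M" using disj by blast
    have "z = m" if "(a, z) \<in> M\<inverse>" for z using single_valuedD[OF sv(2) _ that] woman by simp
    then have "M\<inverse> `` {a} = {m}" using woman by blast
    then have "Range M \<inter> ({a} \<union> M `` {a}) \<subseteq> {a}" "Domain M \<inter> ({a} \<union> M\<inverse> `` {a}) \<subseteq> {m}"
      using \<open>a \<notin> Domain M\<close> by auto
    then have "card (Range M \<inter> ({a} \<union> M `` {a})) \<le> 1"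
      and "card (Domain M \<inter> ({a} \<union> M\<inverse> `` {a})) \<le> 1"
      using le1 by blast+
    moreover have "a \<in> Field M" using woman unfolding Field_def by blast
    ultimately show ?thesis by simp
  next
    case unmatched
    then have "Range M \<inter> ({a} \<union> M `` {a}) = {}" "Domain M \<inter> ({a} \<union> M\<inverse> `` {a}) = {}"
      unfolding Field_def by blast+
    then show ?thesis by simp
  qed
qed

lemma card_Field_diff_le:
  assumes "finite (Field A)"
  shows "card (Field A - Field B) \<le> card (Domain A - Domain B) + card (Range A - Range B)"
proof -
  have fin: "finite (Domain A - Domain B)" "finite (Range A - Range B)"
    using assms unfolding Field_def by auto
  have "Field A - Field B \<subseteq> (Domain A - Domain B) \<union> (Range A - Range B)"
    unfolding Field_def by blast
  then have "card (Field A - Field B) \<le> card ((Domain A - Domain B) \<union> (Range A - Range B))"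
    using fin by (intro card_mono) auto
  also have "\<dots> \<le> card (Domain A - Domain B) + card (Range A - Range B)"
    by (rule card_Un_le)
  finally show ?thesis .
qed

lemma card_newly_matched_after_deletion:
  assumes smi: "smi U W P" and M: "stable U W P M"
    and M': "stable (U - {a}) (W - {a}) (del_pref a P) M'"
  shows "card (Field M' - Field M) \<le> 1"
proof -
  have smi': "smi (U - {a}) (W - {a}) (del_agents {a} P)"
    using smi by (rule smi_del_agents)
  have M'a: "stable (U - {a}) (W - {a}) (del_agents {a} P) M'"
    using M' by (simp add: del_pref_eq_del_agents)
  have fin': "finite (Field M)" "finite (Field M')"
    using stable_finite_Field[OF smi M] stable_finite_Field[OF smi' M'a] .
  then have fin: "finite (Domain M)" "finite (Range M)"
    unfolding Field_def by auto
  have "card (better_off P (M\<inverse>) (M'\<inverse>) \<inter> ({a} \<union> M `` {a})) \<le> card (Range M \<inter> ({a} \<union> M `` {a}))"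
    using better_off_subset_Domain[of P "M\<inverse>" "M'\<inverse>"] fin(2) by (intro card_mono) auto
  then have men: "card (Domain M' - Domain M) + card (Range M - Range M')
                    \<le> card (Range M \<inter> ({a} \<union> M `` {a}))"
    using card_newly_matched_le[OF smi M M'a] by linarith
  have "card (Range M' - Range M) + card (Domain M - Domain M')
          \<le> card (better_off P M M' \<inter> ({a} \<union> M\<inverse> `` {a}))"
    using card_newly_matched_le[of W U P "M\<inverse>" "{a}" "M'\<inverse>"] smi M M'a
    by (simp add: smi_swap stable_converse)
  moreover have "card (better_off P M M' \<inter> ({a} \<union> M\<inverse> `` {a})) \<le> card (Domain M \<inter> ({a} \<union> M\<inverse> `` {a}))"
    using better_off_subset_Domain[of P M M'] fin(1) by (intro card_mono) auto
  ultimately have women: "card (Range M' - Range M) + card (Domain M - Domain M')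
                            \<le> card (Domain M \<inter> ({a} \<union> M\<inverse> `` {a}))"
    by linarith
  have "matching U W P M" "U \<inter> W = {}" using M smi unfolding stable_def smi_def by auto
  note partners = card_partners_le[OF this, of a]
  have lost_a: "1 \<le> card (Domain M - Domain M') + card (Range M - Range M')" if "a \<in> Field M"
  proof -
    have "a \<notin> Field M'" using stable_Domain_Range[OF M'] unfolding Field_def by blast
    then have "a \<in> Domain M - Domain M' \<or> a \<in> Range M - Range M'"
      using that unfolding Field_def by blast
    then show ?thesis using fin by (auto simp: Suc_le_eq card_gt_0_iff)
  qed
  show ?thesis
    using card_Field_diff_le[OF fin'(2), of M] men women partners lost_a
    by (cases "a \<in> Field M") simp_all
qed

theorem mainTheorem7:
  assumes "smi U W P" and "a \<in> U \<union> W"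
  shows "\<forall>x y. x \<notin> ma U W P \<and> x \<in> ma (U - {a}) (W - {a}) (del_pref a P) \<and>
                y \<notin> ma U W P \<and> y \<in> ma (U - {a}) (W - {a}) (del_pref a P) \<longrightarrow> x = y"
proof (intro allI impI)
  fix x y
  assume H: "x \<notin> ma U W P \<and> x \<in> ma (U - {a}) (W - {a}) (del_pref a P) \<and>
             y \<notin> ma U W P \<and> y \<in> ma (U - {a}) (W - {a}) (del_pref a P)"
  obtain M where M: "stable U W P M" using stable_exists[OF assms(1)] by blast
  obtain M' where M': "stable (U - {a}) (W - {a}) (del_pref a P) M'"
    using H unfolding ma_def by blast
  have smi': "smi (U - {a}) (W - {a}) (del_pref a P)"
    using smi_del_agents[OF assms(1)] by (simp add: del_pref_eq_del_agents)
  have "finite (Field M' - Field M)"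
    using stable_finite_Field[OF smi' M'] by blast
  then have "\<forall>z\<in>Field M' - Field M. \<forall>z'\<in>Field M' - Field M. z = z'"
    using card_newly_matched_after_deletion[OF assms(1) M M'] by (simp add: card_le_Suc0_iff_eq)
  moreover have "x \<in> Field M' - Field M" "y \<in> Field M' - Field M"
    using H unfolding ma_eq_Field[OF assms(1) M] ma_eq_Field[OF smi' M'] by blast+
  ultimately show "x = y" by blast
qed

end
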